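(* Let $\rho_{A^nB^n}$ be a positive semidefinite operator on $(\mathbb{C}^{d_Ad_B})^{\otimes n}$ that is permutation-invariant and IID-block-diagonal with respect to orthogonal projections $\{\Pi_i\}_{i=1}^k$ on $\mathbb{C}^{d_Ad_B}$ of ranks $\{d_i\}_{i=1}^k$. Then there exists a purification $|\Psi\rangle\in(\mathbb{C}^{d_Ad_B}\otimes\mathbb{C}^{d_Ad_B})^{\otimes n}$ of $\rho_{A^nB^n}$ supported on $\mathrm{Sym}^n\big(\bigoplus_{i=1}^k\mathbb{C}^{d_i}\otimes\mathbb{C}^{d_i}\big)$, where $\bigoplus_{i=1}^k\mathbb{C}^{d_i}\otimes\mathbb{C}^{d_i}$ denotes the subspace $\bigoplus_{i=1}^k\mathrm{range}(\Pi_i)\otimes\mathrm{range}(\overline{\Pi_i})$ of $\mathbb{C}^{d_Ad_B}\otimes\mathbb{C}^{d_Ad_B}$ (complex conjugation taken in a fixed basis).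
   Context: An operator $\rho$ on $(\mathbb{C}^{d_Ad_B})^{\otimes n}$ is permutation-invariant if $P_\pi\rho P_\pi^\dagger=\rho$ for all $\pi\in S_n$, with $P_\pi$ the unitary permuting the $n$ tensor factors. Given orthogonal projections $\{\Pi_i\}_{i=1}^k$ on $\mathbb{C}^{d_Ad_B}$, $\rho$ is IID-block-diagonal if $\rho=\sum_{\vec{j}\in[k]^n}\Pi_{\vec{j}}\rho\Pi_{\vec{j}}$ where $\Pi_{\vec j}=\Pi_{j_1}\otimes\cdots\otimes\Pi_{j_n}$. $\mathrm{Sym}^n(V)$ is the symmetric subspace of $V^{\otimes n}$, with $V^{\otimes n}$ viewed inside $(\mathbb{C}^{d_Ad_B}\otimes\mathbb{C}^{d_Ad_B})^{\otimes n}$; the purification is with respect to the second factor of each pair (i.e. tracing out the $n$ purifying copies of $\mathbb{C}^{d_Ad_B}$ gives $\rho$). *)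

theory Defs
  imports Complex_Main "HOL-Library.Complex_Order" "HOL-Combinatorics.Permutations"
begin

text \<open>A vector of C^D is a function nat => complex (only entries < D matter),
an operator on C^D is a function nat => nat => complex (entries a,b < D).
The computational basis of (C^D)^{tensor n} is indexed by lists of length n with entries < D;
operators on it are functions nat list => nat list => complex (only entries on that index
set matter). The space (C^D tensor C^D)^{tensor n} has basis indexed by lists of pairs.\<close>

definition idx :: "nat \<Rightarrow> nat \<Rightarrow> nat list set" where
  "idx n D = {xs. length xs = n \<and> set xs \<subseteq> {..<D}}"

definition pidx :: "nat \<Rightarrow> nat \<Rightarrow> (nat \<times> nat) list set" where
  "pidx n D = {ps. length ps = n \<and> set ps \<subseteq> {..<D} \<times> {..<D}}"

definition psd_op :: "nat \<Rightarrow> nat \<Rightarrow> (nat list \<Rightarrow> nat list \<Rightarrow> complex) \<Rightarrow> bool" where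
  "psd_op n D \<rho> \<longleftrightarrow>
     (\<forall>x\<in>idx n D. \<forall>y\<in>idx n D. \<rho> x y = cnj (\<rho> y x)) \<and>
     (\<forall>v :: nat list \<Rightarrow> complex.
        0 \<le> (\<Sum>x\<in>idx n D. \<Sum>y\<in>idx n D. cnj (v x) * \<rho> x y * v y))"

definition perm_invariant :: "nat \<Rightarrow> nat \<Rightarrow> (nat list \<Rightarrow> nat list \<Rightarrow> complex) \<Rightarrow> bool" where
  "perm_invariant n D \<rho> \<longleftrightarrow>
     (\<forall>\<pi>. \<pi> permutes {..<n} \<longrightarrow>
        (\<forall>x\<in>idx n D. \<forall>y\<in>idx n D. \<rho> (permute_list \<pi> x) (permute_list \<pi> y) = \<rho> x y))"

definition orth_proj :: "nat \<Rightarrow> (nat \<Rightarrow> nat \<Rightarrow> complex) \<Rightarrow> bool" where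
  "orth_proj D P \<longleftrightarrow>
     (\<forall>a<D. \<forall>b<D. P a b = cnj (P b a)) \<and>
     (\<forall>a<D. \<forall>b<D. (\<Sum>c<D. P a c * P c b) = P a b)"

text \<open>Pi_{j_1} tensor ... tensor Pi_{j_n} as an operator on (C^D)^{tensor n}.\<close>
definition tensor_proj :: "(nat \<Rightarrow> nat \<Rightarrow> nat \<Rightarrow> complex) \<Rightarrow> nat list \<Rightarrow> nat list \<Rightarrow> nat list \<Rightarrow> complex" where
  "tensor_proj Proj js x y = (\<Prod>i<length js. Proj (js ! i) (x ! i) (y ! i))"

definition iid_block_diag ::
  "nat \<Rightarrow> nat \<Rightarrow> nat \<Rightarrow> (nat \<Rightarrow> nat \<Rightarrow> nat \<Rightarrow> complex) \<Rightarrow> (nat list \<Rightarrow> nat list \<Rightarrow> complex) \<Rightarrow> bool" where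
  "iid_block_diag n D k Proj \<rho> \<longleftrightarrow>
     (\<forall>x\<in>idx n D. \<forall>y\<in>idx n D.
        \<rho> x y = (\<Sum>js\<in>idx n k. \<Sum>u\<in>idx n D. \<Sum>w\<in>idx n D.
                     tensor_proj Proj js x u * \<rho> u w * tensor_proj Proj js w y))"

definition range_op :: "nat \<Rightarrow> (nat \<Rightarrow> nat \<Rightarrow> complex) \<Rightarrow> (nat \<Rightarrow> complex) set" where
  "range_op D P = {u. \<exists>v. u = (\<lambda>a. if a < D then (\<Sum>b<D. P a b * v b) else 0)}"

definition conj_op :: "(nat \<Rightarrow> nat \<Rightarrow> complex) \<Rightarrow> nat \<Rightarrow> nat \<Rightarrow> complex" where
  "conj_op P = (\<lambda>a b. cnj (P a b))"

definition tensor_sub :: "(nat \<Rightarrow> complex) set \<Rightarrow> (nat \<Rightarrow> complex) set \<Rightarrow> (nat \<times> nat \<Rightarrow> complex) set" where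
  "tensor_sub U W = {t. \<exists>(m::nat) (c::nat \<Rightarrow> complex) u w.
       (\<forall>l<m. u l \<in> U \<and> w l \<in> W) \<and>
       t = (\<lambda>(a,b). \<Sum>l<m. c l * u l a * w l b)}"

definition sum_sub :: "nat \<Rightarrow> (nat \<Rightarrow> ('a \<Rightarrow> complex) set) \<Rightarrow> ('a \<Rightarrow> complex) set" where
  "sum_sub k S = {t. \<exists>ts. (\<forall>i<k. ts i \<in> S i) \<and> t = (\<lambda>p. \<Sum>i<k. ts i p)}"

definition prod_vec :: "nat \<Rightarrow> (nat \<Rightarrow> nat \<times> nat \<Rightarrow> complex) \<Rightarrow> (nat \<times> nat) list \<Rightarrow> complex" where
  "prod_vec n vs ps = (if length ps = n then (\<Prod>i<n. vs i (ps ! i)) else 0)"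

definition tensor_pow :: "nat \<Rightarrow> (nat \<times> nat \<Rightarrow> complex) set \<Rightarrow> ((nat \<times> nat) list \<Rightarrow> complex) set" where
  "tensor_pow n V = {\<Psi>. \<exists>(m::nat) (c::nat \<Rightarrow> complex) vs.
       (\<forall>l<m. \<forall>i<n. vs l i \<in> V) \<and>
       \<Psi> = (\<lambda>ps. \<Sum>l<m. c l * prod_vec n (vs l) ps)}"

definition Sym :: "nat \<Rightarrow> (nat \<times> nat \<Rightarrow> complex) set \<Rightarrow> ((nat \<times> nat) list \<Rightarrow> complex) set" where
  "Sym n V = {\<Psi> \<in> tensor_pow n V.
       \<forall>\<pi>. \<pi> permutes {..<n} \<longrightarrow> (\<lambda>ps. \<Psi> (permute_list \<pi> ps)) = \<Psi>}"

text \<open>Psi purifies rho: tracing out the second factor of each pair of |Psi><Psi| gives rho.\<close>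
definition purifies :: "nat \<Rightarrow> nat \<Rightarrow> ((nat \<times> nat) list \<Rightarrow> complex) \<Rightarrow> (nat list \<Rightarrow> nat list \<Rightarrow> complex) \<Rightarrow> bool" where
  "purifies n D \<Psi> \<rho> \<longleftrightarrow>
     (\<forall>x\<in>idx n D. \<forall>y\<in>idx n D.
        \<rho> x y = (\<Sum>z\<in>idx n D. \<Psi> (zip x z) * cnj (\<Psi> (zip y z))))"

end

(* Let B = sqrt rho. It is a polynomial p(rho) with real coefficients and p(0) = 0, obtained by
   interpolating sqrt at 0 and at the nonnegative roots of a squarefree annihilating polynomial
   of rho. Since B is Hermitian with B^2 = rho, its vectorisation Psi(x, z) = B x z purifies rho.
   Being a polynomial in rho, B is permutation invariant; since p(0) = 0 and rho commutes with
   every Pi_j = Pi_(j_1) (x) ... (x) Pi_(j_n), B is again IID-block-diagonal,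
   B = sum_j Pi_j B Pi_j. Expanding Psi along this identity writes it as a combination of
   product vectors whose factors Pi_i e_u (x) conj(Pi_i) e_w lie in range Pi_i (x) range conj(Pi_i). *)

theory Submission
  imports Defs "HOL-Computational_Algebra.Fundamental_Theorem_Algebra" "HOL-Library.Function_Algebras"
begin

section \<open>Matrices indexed by a finite set\<close>

(* Products, identities and polynomials of matrices are normalised to vanish outside S \<times> S,
   so that they satisfy exact equations. *)
type_synonym 'a cmat = "'a \<Rightarrow> 'a \<Rightarrow> complex"

definition mat_mul :: "'a set \<Rightarrow> 'a cmat \<Rightarrow> 'a cmat \<Rightarrow> 'a cmat" where
  "mat_mul S A B = (\<lambda>x y. if x \<in> S \<and> y \<in> S then \<Sum>u\<in>S. A x u * B u y else 0)"

definition mat_one :: "'a set \<Rightarrow> 'a cmat" where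
  "mat_one S = (\<lambda>x y. if x \<in> S \<and> x = y then 1 else 0)"

definition mat_restrict :: "'a set \<Rightarrow> 'a cmat \<Rightarrow> 'a cmat" where
  "mat_restrict S A = (\<lambda>x y. if x \<in> S \<and> y \<in> S then A x y else 0)"

definition mat_scale :: "complex \<Rightarrow> 'a cmat \<Rightarrow> 'a cmat" where
  "mat_scale c A = (\<lambda>x y. c * A x y)"

definition hermitian_on :: "'a set \<Rightarrow> 'a cmat \<Rightarrow> bool" where
  "hermitian_on S A \<longleftrightarrow> (\<forall>x\<in>S. \<forall>y\<in>S. A x y = cnj (A y x))"

definition psd_on :: "'a set \<Rightarrow> 'a cmat \<Rightarrow> bool" where
  "psd_on S A \<longleftrightarrow> (\<forall>v. 0 \<le> (\<Sum>x\<in>S. \<Sum>y\<in>S. cnj (v x) * A x y * v y))"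

lemma sum_apply2: "(\<Sum>i\<in>I. f i) x y = (\<Sum>i\<in>I. f i x y :: 'b :: comm_monoid_add)"
  by (induction I rule: infinite_finite_induct) auto

lemma mat_mul_apply: "x \<in> S \<Longrightarrow> y \<in> S \<Longrightarrow> mat_mul S A B x y = (\<Sum>u\<in>S. A x u * B u y)"
  by (simp add: mat_mul_def)

lemma mat_mul_outside: "\<not> (x \<in> S \<and> y \<in> S) \<Longrightarrow> mat_mul S A B x y = 0"
  by (auto simp: mat_mul_def)

lemma restricted_mat_outside: "mat_restrict S M = M \<Longrightarrow> \<not> (x \<in> S \<and> y \<in> S) \<Longrightarrow> M x y = 0"
  by (metis mat_restrict_def)

lemma mat_restrict_mat_mul [simp]: "mat_restrict S (mat_mul S A B) = mat_mul S A B"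
  by (auto simp: mat_restrict_def mat_mul_def fun_eq_iff)

lemma mat_restrict_mat_one [simp]: "mat_restrict S (mat_one S) = mat_one S"
  by (auto simp: mat_restrict_def mat_one_def fun_eq_iff)

lemma mat_mul_restrict_left [simp]: "mat_mul S (mat_restrict S A) B = mat_mul S A B"
  by (auto simp: mat_mul_def mat_restrict_def fun_eq_iff intro!: sum.cong)

lemma mat_mul_restrict_right [simp]: "mat_mul S A (mat_restrict S B) = mat_mul S A B"
  by (auto simp: mat_mul_def mat_restrict_def fun_eq_iff intro!: sum.cong)

lemma mat_mul_assoc:
  assumes "finite S"
  shows "mat_mul S (mat_mul S A B) C = mat_mul S A (mat_mul S B C)"
proof (intro ext)
  fix x y
  have "(\<Sum>u\<in>S. (\<Sum>v\<in>S. A x v * B v u) * C u y) = (\<Sum>u\<in>S. \<Sum>v\<in>S. A x v * B v u * C u y)"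
    by (simp add: sum_distrib_right)
  also have "\<dots> = (\<Sum>v\<in>S. \<Sum>u\<in>S. A x v * B v u * C u y)"
    by (rule sum.swap)
  also have "\<dots> = (\<Sum>v\<in>S. A x v * (\<Sum>u\<in>S. B v u * C u y))"
    by (simp add: sum_distrib_left mult.assoc)
  finally show "mat_mul S (mat_mul S A B) C x y = mat_mul S A (mat_mul S B C) x y"
    by (simp add: mat_mul_def cong: sum.cong)
qed

lemma mat_mul_one_left: "finite S \<Longrightarrow> mat_mul S (mat_one S) B = mat_restrict S B"
  by (auto simp: mat_mul_def mat_one_def mat_restrict_def fun_eq_iff if_distrib[of "\<lambda>c. c * _"]
      cong: if_cong)

lemma mat_mul_one_right: "finite S \<Longrightarrow> mat_mul S B (mat_one S) = mat_restrict S B"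
  by (auto simp: mat_mul_def mat_one_def mat_restrict_def fun_eq_iff if_distrib[of "\<lambda>c. _ * c"]
      cong: if_cong)

lemma mat_scale_0 [simp]: "mat_scale 0 A = 0"
  and mat_scale_1 [simp]: "mat_scale 1 A = A"
  by (simp_all add: mat_scale_def fun_eq_iff)

lemma mat_mul_zero_left [simp]: "mat_mul S 0 B = 0"
  and mat_mul_zero_right [simp]: "mat_mul S B 0 = 0"
  by (auto simp: mat_mul_def fun_eq_iff)

lemma mat_mul_add_left: "mat_mul S (A + B) C = mat_mul S A C + mat_mul S B C"
  and mat_mul_add_right: "mat_mul S C (A + B) = mat_mul S C A + mat_mul S C B"
  by (auto simp: mat_mul_def fun_eq_iff distrib_left distrib_right sum.distrib)

lemma mat_mul_diff_left: "mat_mul S (A - B) C = mat_mul S A C - mat_mul S B C"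
  by (auto simp: mat_mul_def fun_eq_iff left_diff_distrib sum_subtractf)

lemma mat_mul_scale_left: "mat_mul S (mat_scale c A) C = mat_scale c (mat_mul S A C)"
  and mat_mul_scale_right: "mat_mul S C (mat_scale c A) = mat_scale c (mat_mul S C A)"
  by (auto simp: mat_mul_def mat_scale_def fun_eq_iff sum_distrib_left ac_simps)

lemma mat_mul_sum_left: "mat_mul S (\<Sum>j\<in>J. A j) C = (\<Sum>j\<in>J. mat_mul S (A j) C)"
  unfolding mat_mul_def fun_eq_iff sum_apply2 sum_distrib_right by (auto intro: sum.swap)

lemma mat_mul_sum_right: "mat_mul S C (\<Sum>j\<in>J. A j) = (\<Sum>j\<in>J. mat_mul S C (A j))"
  unfolding mat_mul_def fun_eq_iff sum_apply2 sum_distrib_left by (auto intro: sum.swap)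

lemma cnj_hermitian: "hermitian_on S A \<Longrightarrow> x \<in> S \<Longrightarrow> y \<in> S \<Longrightarrow> cnj (A x y) = A y x"
  unfolding hermitian_on_def by (metis complex_cnj_cnj)

lemma cnj_mat_mul_hermitian:
  assumes "hermitian_on S A" "hermitian_on S B" "x \<in> S" "y \<in> S"
  shows "cnj (mat_mul S A B y x) = mat_mul S B A x y"
proof -
  have "cnj (A y u * B u x) = B x u * A u y" if "u \<in> S" for u
    using assms that by (simp add: cnj_hermitian mult.commute)
  then show ?thesis
    using assms(3,4) by (simp add: mat_mul_def)
qed

section \<open>Polynomials in a matrix\<close>

fun mat_pow :: "'a set \<Rightarrow> 'a cmat \<Rightarrow> nat \<Rightarrow> 'a cmat" where
  "mat_pow S A 0 = mat_one S"
| "mat_pow S A (Suc m) = mat_mul S A (mat_pow S A m)"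

definition poly_mat :: "'a set \<Rightarrow> complex poly \<Rightarrow> 'a cmat \<Rightarrow> 'a cmat" where
  "poly_mat S p A = (\<Sum>i\<le>degree p. mat_scale (coeff p i) (mat_pow S A i))"

lemma mat_restrict_mat_pow [simp]: "mat_restrict S (mat_pow S A i) = mat_pow S A i"
  by (cases i) simp_all

lemma mat_restrict_poly_mat [simp]: "mat_restrict S (poly_mat S p A) = poly_mat S p A"
proof -
  have "mat_pow S A i x y = 0" if "\<not> (x \<in> S \<and> y \<in> S)" for i x y
    using restricted_mat_outside[OF mat_restrict_mat_pow that] .
  then show ?thesis
    by (auto simp: mat_restrict_def poly_mat_def mat_scale_def sum_apply2 fun_eq_iff)
qed

lemma poly_mat_bound:
  assumes "degree p \<le> N"
  shows "poly_mat S p A = (\<Sum>i\<le>N. mat_scale (coeff p i) (mat_pow S A i))"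
  unfolding poly_mat_def using assms
  by (intro sum.mono_neutral_left) (auto simp: coeff_eq_0 mat_scale_def fun_eq_iff)

lemma poly_mat_0 [simp]: "poly_mat S 0 A = 0"
  by (simp add: poly_mat_def mat_scale_def fun_eq_iff)

lemma poly_mat_pCons:
  "poly_mat S (pCons a p) A = mat_scale a (mat_one S) + mat_mul S A (poly_mat S p A)"
proof -
  have "poly_mat S (pCons a p) A = (\<Sum>i\<le>Suc (degree p). mat_scale (coeff (pCons a p) i) (mat_pow S A i))"
    by (rule poly_mat_bound) (rule degree_pCons_le)
  also have "\<dots> = mat_scale a (mat_one S) + (\<Sum>i\<le>degree p. mat_scale (coeff p i) (mat_mul S A (mat_pow S A i)))"
    by (subst sum.atMost_Suc_shift) simp
  finally show ?thesis
    by (simp add: poly_mat_def mat_mul_sum_right mat_mul_scale_right)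
qed

lemma poly_mat_add: "poly_mat S (p + q) A = poly_mat S p A + poly_mat S q A"
proof -
  define N where "N = max (degree p) (degree q)"
  have "degree (p + q) \<le> N" by (simp add: N_def degree_add_le)
  then show ?thesis
    by (simp add: poly_mat_bound[of _ N] N_def sum.distrib[symmetric] mat_scale_def
        fun_eq_iff sum_apply2 distrib_right)
qed

lemma poly_mat_smult: "poly_mat S (smult c p) A = mat_scale c (poly_mat S p A)"
  by (simp add: poly_mat_bound[of "smult c p" "degree p"] poly_mat_def mat_scale_def
      fun_eq_iff sum_apply2 sum_distrib_left mult.assoc)

lemma poly_mat_diff: "poly_mat S (p - q) A = poly_mat S p A - poly_mat S q A"
  using poly_mat_add[of S p "-q" A] poly_mat_smult[of S "-1" q A]
  by (simp add: mat_scale_def fun_eq_iff)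

lemma poly_mat_monom: "poly_mat S (monom c i) A = mat_scale c (mat_pow S A i)"
proof -
  have "poly_mat S (monom c i) A = (\<Sum>j\<le>i. mat_scale (coeff (monom c i) j) (mat_pow S A j))"
    by (rule poly_mat_bound) (rule degree_monom_le)
  also have "\<dots> = (\<Sum>j\<le>i. if j = i then mat_scale c (mat_pow S A i) else 0)"
    by (intro sum.cong) (auto simp: coeff_monom mat_scale_def fun_eq_iff)
  finally show ?thesis by simp
qed

(* Induction presents 0 and + on matrices eta-expanded; evaluating them pointwise
   would block the matrix-level rewrite rules. *)
context
  notes zero_fun_apply [simp del] and plus_fun_apply [simp del]
begin

lemma poly_mat_sum: "poly_mat S (\<Sum>i\<in>I. p i) A = (\<Sum>i\<in>I. poly_mat S (p i) A)"
  by (induction I rule: infinite_finite_induct) (simp_all add: poly_mat_add)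

lemma poly_mat_mult:
  assumes "finite S"
  shows "poly_mat S (p * q) A = mat_mul S (poly_mat S p A) (poly_mat S q A)"
proof (induction p)
  case (pCons a p)
  have "poly_mat S (pCons a p * q) A = mat_scale a (poly_mat S q A) + mat_mul S A (poly_mat S (p * q) A)"
    by (simp add: poly_mat_add poly_mat_smult poly_mat_pCons)
  also have "\<dots> = mat_scale a (mat_mul S (mat_one S) (poly_mat S q A))
      + mat_mul S (mat_mul S A (poly_mat S p A)) (poly_mat S q A)"
    by (simp add: pCons.IH mat_mul_one_left[OF assms] mat_mul_assoc[OF assms])
  also have "\<dots> = mat_mul S (poly_mat S (pCons a p) A) (poly_mat S q A)"
    by (simp add: poly_mat_pCons mat_mul_add_left mat_mul_scale_left)
  finally show ?case .
qed simp

lemma poly_mat_commute: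
  assumes "finite S" and "mat_mul S C A = mat_mul S A C"
  shows "mat_mul S C (poly_mat S p A) = mat_mul S (poly_mat S p A) C"
proof (induction p)
  case (pCons a p)
  have "mat_mul S C (mat_mul S A (poly_mat S p A)) = mat_mul S (mat_mul S A C) (poly_mat S p A)"
    by (simp add: assms(2) flip: mat_mul_assoc[OF assms(1)])
  also have "\<dots> = mat_mul S A (mat_mul S (poly_mat S p A) C)"
    by (simp add: mat_mul_assoc[OF assms(1)] pCons.IH)
  finally show ?case
    using assms(1)
    by (simp add: poly_mat_pCons mat_mul_add_left mat_mul_add_right mat_mul_scale_left
        mat_mul_scale_right mat_mul_one_left mat_mul_one_right mat_mul_assoc)
qed simp

end

lemma poly_mat_X: "finite S \<Longrightarrow> poly_mat S [:0, 1:] A = mat_restrict S A"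
  by (simp add: poly_mat_pCons mat_mul_one_right mat_scale_def fun_eq_iff)

lemma mat_mul_poly_mat_mult:
  "finite S \<Longrightarrow> mat_mul S (poly_mat S (p * q) A) X = mat_mul S (poly_mat S p A) (mat_mul S (poly_mat S q A) X)"
  by (simp add: poly_mat_mult mat_mul_assoc)

lemma poly_mat_invariant:
  assumes "bij_betw \<sigma> S S" and "\<forall>x\<in>S. \<forall>y\<in>S. A (\<sigma> x) (\<sigma> y) = A x y"
  shows "\<forall>x\<in>S. \<forall>y\<in>S. poly_mat S p A (\<sigma> x) (\<sigma> y) = poly_mat S p A x y"
proof (induction p)
  case (pCons a p)
  have \<sigma>S: "x \<in> S \<Longrightarrow> \<sigma> x \<in> S" "x \<in> S \<Longrightarrow> y \<in> S \<Longrightarrow> \<sigma> x = \<sigma> y \<longleftrightarrow> x = y" for x y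
    using assms(1) by (auto simp: bij_betw_def inj_on_eq_iff)
  have "mat_mul S A (poly_mat S p A) (\<sigma> x) (\<sigma> y) = mat_mul S A (poly_mat S p A) x y"
    if "x \<in> S" "y \<in> S" for x y
    using that pCons.IH assms(2) \<sigma>S
    by (simp add: mat_mul_def sum.reindex_bij_betw[OF assms(1), symmetric, of "\<lambda>u. A (\<sigma> x) u * _ u (\<sigma> y)"])
  then show ?case
    by (simp add: poly_mat_pCons mat_scale_def mat_one_def \<sigma>S)
qed (simp add: mat_scale_def)

lemma hermitian_poly_mat:
  assumes "finite S" and "hermitian_on S A" and "\<And>i. coeff p i \<in> \<real>"
  shows "hermitian_on S (poly_mat S p A)"
  using assms(3)
proof (induction p)
  case (pCons a p)
  then have real_a: "cnj a = a" and herm_p: "hermitian_on S (poly_mat S p A)"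
    by (metis Reals_cnj_iff coeff_pCons_0, metis coeff_pCons_Suc)
  have "mat_mul S (poly_mat S p A) A = mat_mul S A (poly_mat S p A)"
    using poly_mat_commute[OF assms(1), of A A] by simp
  then have "cnj (mat_mul S A (poly_mat S p A) y x) = mat_mul S A (poly_mat S p A) x y"
    if "x \<in> S" "y \<in> S" for x y
    using cnj_mat_mul_hermitian[OF assms(2) herm_p that] by simp
  then show ?case
    using real_a by (auto simp: hermitian_on_def poly_mat_pCons mat_scale_def mat_one_def)
qed (simp add: hermitian_on_def)

section \<open>Square roots of positive semidefinite matrices\<close>

lemma sum_cnj_mult_self: "(\<Sum>x\<in>S. cnj (v x) * v x) = complex_of_real (\<Sum>x\<in>S. (cmod (v x))\<^sup>2)"
  by (simp only: of_real_sum complex_norm_square mult.commute)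

lemma mat_eq_0_if_column_norms_0:
  assumes "finite S" and "mat_restrict S U = U"
    and "\<And>y. y \<in> S \<Longrightarrow> (\<Sum>x\<in>S. cnj (U x y) * U x y) = 0"
  shows "U = 0"
proof (intro ext)
  fix x y
  have "U x y = 0" if "x \<in> S" "y \<in> S"
  proof -
    have "(\<Sum>u\<in>S. (cmod (U u y))\<^sup>2) = 0"
      using assms(3)[OF that(2)] by (simp only: sum_cnj_mult_self of_real_eq_0_iff)
    then show ?thesis
      using that(1) sum_nonneg_eq_0_iff[OF assms(1), of "\<lambda>u. (cmod (U u y))\<^sup>2"] by simp
  qed
  then show "U x y = 0 x y"
    using restricted_mat_outside[OF assms(2)] by auto
qed

lemma nonneg_if_nonneg_mult_pos_real:
  "0 \<le> b * complex_of_real r \<Longrightarrow> 0 < r \<Longrightarrow> 0 \<le> b"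
  by (auto simp: less_eq_complex_def zero_le_mult_iff)

lemma psd_eigenvector_zero:
  assumes "finite S" and "psd_on S A" and "mat_restrict S Y = Y"
    and "mat_mul S A Y = mat_scale b Y" and "\<not> 0 \<le> b"
  shows "Y = 0"
proof (rule mat_eq_0_if_column_norms_0[OF assms(1,3)])
  fix y assume y: "y \<in> S"
  define r where "r = (\<Sum>x\<in>S. (cmod (Y x y))\<^sup>2)"
  have "(\<Sum>x\<in>S. \<Sum>u\<in>S. cnj (Y x y) * A x u * Y u y) = (\<Sum>x\<in>S. cnj (Y x y) * mat_mul S A Y x y)"
    by (intro sum.cong refl) (simp add: mat_mul_apply y sum_distrib_left mult.assoc)
  also have "\<dots> = b * (\<Sum>x\<in>S. cnj (Y x y) * Y x y)"
    by (simp add: assms(4) mat_scale_def sum_distrib_left mult.left_commute)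
  also have "\<dots> = b * complex_of_real r"
    by (simp only: r_def sum_cnj_mult_self)
  finally have "0 \<le> b * complex_of_real r"
    using assms(2)[unfolded psd_on_def, rule_format, of "\<lambda>x. Y x y"] by simp
  have "r = 0"
  proof (rule ccontr)
    assume "r \<noteq> 0"
    then have "0 < r" by (simp add: r_def order_le_neq_trans[OF sum_nonneg])
    with \<open>0 \<le> b * complex_of_real r\<close> have "0 \<le> b" by (rule nonneg_if_nonneg_mult_pos_real)
    with assms(5) show False ..
  qed
  then show "(\<Sum>x\<in>S. cnj (Y x y) * Y x y) = 0"
    by (simp add: r_def sum_cnj_mult_self)
qed

lemma hermitian_mat_mul_square_zero:
  assumes "finite S" and "hermitian_on S H" and "mat_mul S H (mat_mul S H Y) = 0"
  shows "mat_mul S H Y = 0"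
proof (rule mat_eq_0_if_column_norms_0[OF assms(1) mat_restrict_mat_mul])
  fix y assume y: "y \<in> S"
  let ?U = "mat_mul S H Y"
  have "(\<Sum>x\<in>S. cnj (?U x y) * ?U x y) = (\<Sum>x\<in>S. \<Sum>z\<in>S. cnj (Y z y) * H z x * ?U x y)"
  proof (rule sum.cong[OF refl])
    fix x assume x: "x \<in> S"
    have "cnj (?U x y) = (\<Sum>z\<in>S. cnj (Y z y) * H z x)"
      using x y by (simp add: mat_mul_apply cnj_hermitian[OF assms(2)] mult.commute cong: sum.cong)
    then show "cnj (?U x y) * ?U x y = (\<Sum>z\<in>S. cnj (Y z y) * H z x * ?U x y)"
      by (simp add: sum_distrib_right)
  qed
  also have "\<dots> = (\<Sum>z\<in>S. \<Sum>x\<in>S. cnj (Y z y) * H z x * ?U x y)"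
    by (rule sum.swap)
  also have "\<dots> = (\<Sum>z\<in>S. cnj (Y z y) * mat_mul S H ?U z y)"
    by (intro sum.cong refl) (simp add: mat_mul_apply y sum_distrib_left mult.assoc)
  also have "\<dots> = 0"
    using assms(3) by simp
  finally show "(\<Sum>x\<in>S. cnj (?U x y) * ?U x y) = 0" .
qed

lemma mat_mul_linear_factor:
  assumes "finite S"
  shows "mat_mul S (poly_mat S [:-b, 1:] A) Y = mat_mul S A Y - mat_scale b (mat_restrict S Y)"
proof -
  have "poly_mat S [:-b, 1:] A = mat_restrict S A - mat_scale b (mat_one S)"
    using assms by (simp add: poly_mat_pCons mat_mul_one_right) (simp add: fun_eq_iff mat_scale_def)
  then show ?thesis
    using assms by (simp add: mat_mul_diff_left mat_mul_scale_left mat_mul_one_left)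
qed

lemma psd_cancel_negative_root:
  assumes "finite S" and "psd_on S A" and "\<not> 0 \<le> b"
    and "mat_mul S (poly_mat S ([:-b, 1:] * q) A) X = 0"
  shows "mat_mul S (poly_mat S q A) X = 0"
proof (rule psd_eigenvector_zero[OF assms(1,2) mat_restrict_mat_mul _ assms(3)])
  let ?Z = "mat_mul S (poly_mat S q A) X"
  have "mat_mul S (poly_mat S [:-b, 1:] A) ?Z = 0"
    using assms(4) by (simp only: mat_mul_poly_mat_mult[OF assms(1)])
  then show "mat_mul S A ?Z = mat_scale b ?Z"
    by (simp add: mat_mul_linear_factor[OF assms(1)])
qed

lemma hermitian_cancel_double_root:
  assumes "finite S" and "hermitian_on S A" and "0 \<le> b"
    and "mat_mul S (poly_mat S ([:-b, 1:] * ([:-b, 1:] * q)) A) X = 0"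
  shows "mat_mul S (poly_mat S ([:-b, 1:] * q) A) X = 0"
proof -
  have "coeff [:-b, 1:] i \<in> \<real>" for i
    using nonnegative_complex_is_real[OF assms(3)] by (simp add: coeff_pCons split: nat.split)
  then have "hermitian_on S (poly_mat S [:-b, 1:] A)"
    by (rule hermitian_poly_mat[OF assms(1,2)])
  moreover have "mat_mul S (poly_mat S [:-b, 1:] A)
      (mat_mul S (poly_mat S [:-b, 1:] A) (mat_mul S (poly_mat S q A) X)) = 0"
    using assms(4) by (simp only: mat_mul_poly_mat_mult[OF assms(1)])
  ultimately show ?thesis
    using hermitian_mat_mul_square_zero[OF assms(1)]
    by (simp only: mat_mul_poly_mat_mult[OF assms(1)])
qed

lemma hermitian_absorb_nonneg_root:
  assumes "finite S" and "hermitian_on S A" and "0 \<le> b" and "finite G"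
    and "mat_mul S (poly_mat S ((\<Prod>z\<in>G. [:-z, 1:]) * [:-b, 1:]) A) X = 0"
  shows "mat_mul S (poly_mat S (\<Prod>z\<in>insert b G. [:-z, 1:]) A) X = 0"
proof (cases "b \<in> G")
  case False
  then show ?thesis
    using assms(5) by (simp only: prod.insert[OF assms(4) False] mult.commute)
next
  case True
  define F where "F = (\<Prod>z\<in>G - {b}. [:-z, 1:])"
  have G: "(\<Prod>z\<in>G. [:-z, 1:]) = [:-b, 1:] * F"
    unfolding F_def using assms(4) True by (rule prod.remove)
  have "mat_mul S (poly_mat S ([:-b, 1:] * ([:-b, 1:] * F)) A) X = 0"
    using assms(5) by (simp only: G mult_ac)
  then have "mat_mul S (poly_mat S ([:-b, 1:] * F) A) X = 0"
    by (rule hermitian_cancel_double_root[OF assms(1-3)])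
  then show ?thesis
    using True by (simp only: G insert_absorb)
qed

(* A linear factor with a root outside [0, oo) acts injectively by positivity, and a repeated
   factor can be dropped because A is Hermitian. *)
lemma psd_annihilator_nonneg_roots:
  fixes M :: "complex multiset"
  assumes "finite S" and "hermitian_on S A" and "psd_on S A"
    and "mat_mul S (poly_mat S (\<Prod>z\<in>#M. [:-z, 1:]) A) X = 0"
  shows "mat_mul S (poly_mat S (\<Prod>z | z \<in># M \<and> 0 \<le> z. [:-z, 1:]) A) X = 0"
  using assms(4)
proof (induction M arbitrary: X)
  case (add b M)
  let ?L = "[:-b, 1:]"
  define G where "G = {z. z \<in># M \<and> 0 \<le> z}"
  have prems: "mat_mul S (poly_mat S (?L * (\<Prod>z\<in>#M. [:-z, 1:])) A) X = 0"
    using add.prems by (simp only: image_mset_add_mset prod_mset.add_mset)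
  show ?case
  proof (cases "0 \<le> b")
    case False
    then have "{z. z \<in># add_mset b M \<and> 0 \<le> z} = G" by (auto simp: G_def)
    then show ?thesis
      using add.IH[OF psd_cancel_negative_root[OF assms(1,3) False prems]] by (simp only: G_def)
  next
    case True
    have "mat_mul S (poly_mat S (\<Prod>z\<in>#M. [:-z, 1:]) A) (mat_mul S (poly_mat S ?L A) X) = 0"
      using prems by (simp only: mult.commute[of ?L] mat_mul_poly_mat_mult[OF assms(1)])
    then have "mat_mul S (poly_mat S (\<Prod>z\<in>G. [:-z, 1:]) A) (mat_mul S (poly_mat S ?L A) X) = 0"
      unfolding G_def by (rule add.IH)
    then have "mat_mul S (poly_mat S ((\<Prod>z\<in>G. [:-z, 1:]) * ?L) A) X = 0"
      by (simp only: mat_mul_poly_mat_mult[OF assms(1)])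
    moreover have "finite G"
      by (simp add: G_def)
    ultimately have "mat_mul S (poly_mat S (\<Prod>z\<in>insert b G. [:-z, 1:]) A) X = 0"
      by (intro hermitian_absorb_nonneg_root[OF assms(1,2) True])
    moreover have "{z. z \<in># add_mset b M \<and> 0 \<le> z} = insert b G"
      using True by (auto simp: G_def)
    ultimately show ?thesis
      by (simp only:)
  qed
qed simp

interpretation cmat: vector_space "mat_scale :: complex \<Rightarrow> 'a cmat \<Rightarrow> 'a cmat"
  by unfold_locales (auto simp: mat_scale_def fun_eq_iff algebra_simps)

definition mat_unit :: "'a \<Rightarrow> 'a \<Rightarrow> 'a cmat" where
  "mat_unit s t = (\<lambda>x y. if x = s \<and> y = t then 1 else 0)"

lemma restricted_in_span_mat_unit:
  assumes "finite S" and "mat_restrict S M = M"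
  shows "M \<in> cmat.span ((\<lambda>(s, t). mat_unit s t) ` (S \<times> S))"
proof -
  have "M = (\<Sum>(s, t)\<in>S \<times> S. mat_scale (M s t) (mat_unit s t))"
  proof (intro ext)
    fix x y
    have "(\<Sum>(s, t)\<in>S \<times> S. mat_scale (M s t) (mat_unit s t)) x y
        = (\<Sum>p\<in>S \<times> S. if p = (x, y) then M x y else 0)"
      unfolding sum_apply2 by (intro sum.cong) (auto simp: mat_scale_def mat_unit_def split: if_split_asm)
    also have "\<dots> = M x y"
      using assms restricted_mat_outside[OF assms(2)] by auto
    finally show "M x y = (\<Sum>(s, t)\<in>S \<times> S. mat_scale (M s t) (mat_unit s t)) x y" ..
  qed
  also have "\<dots> \<in> cmat.span ((\<lambda>(s, t). mat_unit s t) ` (S \<times> S))"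
    by (intro cmat.span_sum) (auto intro: cmat.span_scale cmat.span_base)
  finally show ?thesis .
qed

(* In place of Cayley-Hamilton: the card S ^ 2 + 1 powers A ^ 0, ..., A ^ (card S ^ 2) are
   linearly dependent in the (card S ^ 2)-dimensional space of matrices on S. *)
lemma poly_mat_annihilator_exists:
  assumes "finite S"
  shows "\<exists>q. q \<noteq> 0 \<and> poly_mat S q A = 0"
proof (cases "inj_on (mat_pow S A) {..card S * card S}")
  case False
  then obtain i j where "i \<noteq> j" "mat_pow S A i = mat_pow S A j"
    unfolding inj_on_def by blast
  define q :: "complex poly" where "q = monom 1 i - monom 1 j"
  have "coeff q i = 1"
    using \<open>i \<noteq> j\<close> by (simp add: q_def coeff_monom)
  then have "q \<noteq> 0" by auto
  moreover have "poly_mat S q A = 0"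
    using \<open>mat_pow S A i = mat_pow S A j\<close> by (simp add: q_def poly_mat_diff poly_mat_monom)
  ultimately show ?thesis by blast
next
  case True
  let ?K = "card S * card S"
  define X where "X = mat_pow S A ` {..?K}"
  define U where "U = (\<lambda>(s, t). mat_unit s t) ` (S \<times> S)"
  have "card U \<le> ?K"
    unfolding U_def using card_image_le[of "S \<times> S"] assms by (simp add: card_cartesian_product)
  moreover have "card X = Suc ?K"
    unfolding X_def using card_image[OF True] by simp
  moreover have "X \<subseteq> cmat.span U"
    unfolding X_def U_def using restricted_in_span_mat_unit[OF assms] by auto
  ultimately have "cmat.dependent X"
    using cmat.independent_span_bound[of U X] assms by (auto simp: U_def)
  then obtain u where u: "\<exists>v\<in>X. u v \<noteq> 0" "(\<Sum>v\<in>X. mat_scale (u v) v) = 0"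
    using cmat.dependent_finite[of X] by (auto simp: X_def)
  define q where "q = (\<Sum>i\<le>?K. monom (u (mat_pow S A i)) i)"
  have "poly_mat S q A = (\<Sum>v\<in>X. mat_scale (u v) v)"
    unfolding q_def X_def by (simp add: poly_mat_sum poly_mat_monom sum.reindex[OF True])
  moreover obtain i where "i \<le> ?K" "u (mat_pow S A i) \<noteq> 0"
    using u(1) by (auto simp: X_def)
  then have "coeff q i \<noteq> 0"
    by (simp add: q_def coeff_sum coeff_monom)
  ultimately show ?thesis
    using u(2) by (metis coeff_0)
qed

lemma real_poly_interpolation:
  fixes f :: "real \<Rightarrow> real"
  assumes "finite T"
  shows "\<exists>p. \<forall>t\<in>T. poly p t = f t"
  using assms
proof (induction T rule: finite_induct)
  case (insert a T)
  then obtain p where p: "\<forall>t\<in>T. poly p t = f t" by blast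
  define w where "w = (\<Prod>t\<in>T. [:-t, 1:])"
  have "poly w t = 0" if "t \<in> T" for t
    using that insert.hyps(1) by (simp add: w_def poly_prod prod_zero_iff)
  moreover have "poly w a \<noteq> 0"
    using insert.hyps by (auto simp: w_def poly_prod prod_zero_iff)
  ultimately have "\<forall>t\<in>insert a T. poly (p + smult ((f a - poly p a) / poly w a) w) t = f t"
    using p by auto
  then show ?case by blast
qed simp

lemma prod_linear_factors_dvd:
  fixes q :: "'a :: idom poly"
  assumes "finite G" and "\<And>a. a \<in> G \<Longrightarrow> poly q a = 0"
  shows "(\<Prod>a\<in>G. [:-a, 1:]) dvd q"
  using assms
proof (induction G arbitrary: q rule: finite_induct)
  case (insert a G)
  have "[:-a, 1:] dvd q"
    using insert.prems[of a] by (simp add: poly_eq_0_iff_dvd)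
  then obtain q' where q': "q = [:-a, 1:] * q'" ..
  have "poly q' g = 0" if "g \<in> G" for g
    using insert.hyps(2) insert.prems[of g] that q' by auto
  then have "(\<Prod>a\<in>G. [:-a, 1:]) dvd q'"
    by (rule insert.IH)
  then show ?case
    unfolding q' prod.insert[OF insert.hyps] by (rule mult_dvd_mono[OF dvd_refl])
qed simp

lemma psd_nonneg_roots_annihilate:
  assumes "finite S" and "hermitian_on S A" and "psd_on S A"
  shows "\<exists>G. finite G \<and> (\<forall>a\<in>G. 0 \<le> a) \<and> poly_mat S (\<Prod>a\<in>G. [:-a, 1:]) A = 0"
proof -
  obtain q where "q \<noteq> 0" "poly_mat S q A = 0"
    using poly_mat_annihilator_exists[OF assms(1)] by blast
  then have "poly_mat S (\<Prod>z\<in>#proots q. [:-z, 1:]) A = 0"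
    using poly_mat_smult[of S "lead_coeff q" "\<Prod>z\<in>#proots q. [:-z, 1:]" A]
    by (simp add: complex_poly_decompose_multiset mat_scale_def fun_eq_iff)
  then have "mat_mul S (poly_mat S (\<Prod>z | z \<in># proots q \<and> 0 \<le> z. [:-z, 1:]) A) (mat_one S) = 0"
    by (intro psd_annihilator_nonneg_roots[OF assms]) simp
  then show ?thesis
    by (intro exI[of _ "{z. z \<in># proots q \<and> 0 \<le> z}"]) (simp add: mat_mul_one_right assms(1))
qed

lemma poly_map_poly_of_real:
  "poly (map_poly of_real p) (of_real x) = (of_real (poly p x) :: 'a :: {real_algebra_1, comm_ring})"
  by (induction p) (auto simp: map_poly_pCons)

lemma psd_sqrt_poly:
  assumes "finite S" and "hermitian_on S A" and "psd_on S A"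
  shows "\<exists>p. (\<forall>i. coeff p i \<in> \<real>) \<and> coeff p 0 = 0
           \<and> mat_mul S (poly_mat S p A) (poly_mat S p A) = mat_restrict S A"
proof -
  obtain G where G: "finite G" "\<forall>a\<in>G. 0 \<le> a" and annih: "poly_mat S (\<Prod>a\<in>G. [:-a, 1:]) A = 0"
    using psd_nonneg_roots_annihilate[OF assms] by blast
  obtain r where r: "\<forall>t\<in>insert 0 (Re ` G). poly r t = sqrt t"
    using real_poly_interpolation[of "insert 0 (Re ` G)" sqrt] G(1) by blast
  define p where "p = map_poly complex_of_real r"
  have "poly p a * poly p a = a" if "a \<in> G" for a
  proof -
    have "0 \<le> Re a" and re_a: "complex_of_real (Re a) = a"
      using G(2) that by (auto simp: less_eq_complex_def complex_eq_iff)
    have "poly p (complex_of_real (Re a)) = complex_of_real (sqrt (Re a))"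
      using r that by (simp add: p_def poly_map_poly_of_real)
    then have "poly p a = complex_of_real (sqrt (Re a))"
      by (simp only: re_a)
    then show ?thesis
      using \<open>0 \<le> Re a\<close> re_a by (simp flip: of_real_mult)
  qed
  then have "(\<Prod>a\<in>G. [:-a, 1:]) dvd p * p - [:0, 1:]"
    by (intro prod_linear_factors_dvd[OF G(1)]) simp
  then obtain c where "p * p - [:0, 1:] = (\<Prod>a\<in>G. [:-a, 1:]) * c" ..
  then have "poly_mat S (p * p - [:0, 1:]) A = 0"
    by (simp only: poly_mat_mult[OF assms(1)] annih mat_mul_zero_left)
  then have "mat_mul S (poly_mat S p A) (poly_mat S p A) = mat_restrict S A"
    by (simp only: poly_mat_diff poly_mat_mult[OF assms(1)] poly_mat_X[OF assms(1)] right_minus_eq)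
  moreover have "coeff p 0 = 0"
    using r by (simp add: p_def coeff_map_poly poly_0_coeff_0)
  moreover have "\<forall>i. coeff p i \<in> \<real>"
    by (simp add: p_def coeff_map_poly)
  ultimately show ?thesis by blast
qed

section \<open>IID-block-diagonal operators on tensor powers\<close>

lemma finite_idx: "finite (idx n D)"
  using finite_lists_length_eq[of "{..<D}" n] by (simp add: idx_def conj_commute)

lemma idx_nth: "xs \<in> idx n D \<Longrightarrow> i < n \<Longrightarrow> xs ! i < D"
  by (auto simp: idx_def subset_iff)

lemma idx_Suc: "idx (Suc n) D = (\<lambda>(c, u). c # u) ` ({..<D} \<times> idx n D)"
  by (auto simp: idx_def length_Suc_conv image_iff)

lemma sum_idx_prod:
  "(\<Sum>u\<in>idx n D. \<Prod>i<n. f i (u ! i)) = (\<Prod>i<n. \<Sum>c<D. f i c :: complex)"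
proof (induction n arbitrary: f)
  case 0
  have "idx 0 D = {[]}" by (auto simp: idx_def)
  then show ?case by simp
next
  case (Suc n)
  have inj: "inj_on (\<lambda>(c, u). c # u) ({..<D} \<times> idx n D)"
    by (auto simp: inj_on_def)
  have "(\<Sum>u\<in>idx (Suc n) D. \<Prod>i<Suc n. f i (u ! i))
      = (\<Sum>(c, u)\<in>{..<D} \<times> idx n D. \<Prod>i<Suc n. f i ((c # u) ! i))"
    unfolding idx_Suc sum.reindex[OF inj] by (simp only: o_def case_prod_unfold)
  also have "\<dots> = (\<Sum>(c, u)\<in>{..<D} \<times> idx n D. f 0 c * (\<Prod>i<n. f (Suc i) (u ! i)))"
    by (simp only: prod.lessThan_Suc_shift nth_Cons_0 nth_Cons_Suc)
  also have "\<dots> = (\<Sum>c<D. f 0 c) * (\<Prod>i<n. \<Sum>c<D. f (Suc i) c)"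
    using Suc.IH[of "\<lambda>i. f (Suc i)"]
    by (simp flip: sum.cartesian_product sum_distrib_left sum_distrib_right)
  finally show ?case
    by (simp only: prod.lessThan_Suc_shift)
qed

lemma orth_proj_idem: "orth_proj D P \<Longrightarrow> a < D \<Longrightarrow> b < D \<Longrightarrow> (\<Sum>c<D. P a c * P c b) = P a b"
  unfolding orth_proj_def by blast

lemma orth_proj_cnj: "orth_proj D P \<Longrightarrow> a < D \<Longrightarrow> b < D \<Longrightarrow> cnj (P a b) = P b a"
  unfolding orth_proj_def by (metis complex_cnj_cnj)

lemma tensor_proj_mul:
  assumes orth: "\<forall>i<k. orth_proj D (Proj i)"
    and perp: "\<forall>i<k. \<forall>j<k. i \<noteq> j \<longrightarrow> (\<forall>a<D. \<forall>b<D. (\<Sum>c<D. Proj i a c * Proj j c b) = 0)"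
    and "js \<in> idx n k" and "js' \<in> idx n k"
  shows "mat_mul (idx n D) (tensor_proj Proj js) (tensor_proj Proj js') =
         (if js = js' then mat_restrict (idx n D) (tensor_proj Proj js) else 0)"
proof (intro ext)
  fix x y
  have len: "length js = n" "length js' = n"
    using assms(3,4) by (auto simp: idx_def)
  have factor: "(\<Sum>c<D. Proj (js ! i) (x ! i) c * Proj (js' ! i) c (y ! i))
      = (if js ! i = js' ! i then Proj (js ! i) (x ! i) (y ! i) else 0)"
    if "x \<in> idx n D" "y \<in> idx n D" "i < n" for i
    using orth_proj_idem[OF orth[rule_format]] perp idx_nth[OF that(1,3)] idx_nth[OF that(2,3)]
      idx_nth[OF assms(3) that(3)] idx_nth[OF assms(4) that(3)]
    by auto
  have prod_eq: "(\<Prod>i<n. if js ! i = js' ! i then Proj (js ! i) (x ! i) (y ! i) else 0)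
      = (if js = js' then tensor_proj Proj js x y else 0)"
  proof (cases "js = js'")
    case False
    then obtain i where "i < n" "js ! i \<noteq> js' ! i"
      using len nth_equalityI by metis
    then show ?thesis
      using False by (auto intro!: prod_zero)
  qed (simp add: tensor_proj_def len)
  show "mat_mul (idx n D) (tensor_proj Proj js) (tensor_proj Proj js') x y
      = (if js = js' then mat_restrict (idx n D) (tensor_proj Proj js) else 0) x y"
  proof (cases "x \<in> idx n D \<and> y \<in> idx n D")
    case True
    have "mat_mul (idx n D) (tensor_proj Proj js) (tensor_proj Proj js') x y
        = (\<Sum>u\<in>idx n D. \<Prod>i<n. Proj (js ! i) (x ! i) (u ! i) * Proj (js' ! i) (u ! i) (y ! i))"
      using True len by (simp add: mat_mul_def tensor_proj_def prod.distrib)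
    also have "\<dots> = (\<Prod>i<n. \<Sum>c<D. Proj (js ! i) (x ! i) c * Proj (js' ! i) c (y ! i))"
      by (rule sum_idx_prod)
    also have "\<dots> = (\<Prod>i<n. if js ! i = js' ! i then Proj (js ! i) (x ! i) (y ! i) else 0)"
      using factor True by (intro prod.cong) auto
    finally show ?thesis
      using True prod_eq by (simp add: mat_restrict_def)
  qed (auto simp: mat_mul_def mat_restrict_def)
qed

lemma mat_mul_tensor_proj_apply:
  assumes "x \<in> idx n D" and "y \<in> idx n D"
  shows "mat_mul (idx n D) (mat_mul (idx n D) (tensor_proj Proj js) \<rho>) (tensor_proj Proj js) x y
    = (\<Sum>u\<in>idx n D. \<Sum>w\<in>idx n D. tensor_proj Proj js x u * \<rho> u w * tensor_proj Proj js w y)"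
proof -
  have "mat_mul (idx n D) (mat_mul (idx n D) (tensor_proj Proj js) \<rho>) (tensor_proj Proj js) x y
      = (\<Sum>w\<in>idx n D. \<Sum>u\<in>idx n D. tensor_proj Proj js x u * \<rho> u w * tensor_proj Proj js w y)"
    using assms by (simp add: mat_mul_apply sum_distrib_right cong: sum.cong)
  also have "\<dots> = (\<Sum>u\<in>idx n D. \<Sum>w\<in>idx n D. tensor_proj Proj js x u * \<rho> u w * tensor_proj Proj js w y)"
    by (rule sum.swap)
  finally show ?thesis .
qed

lemma iid_block_diag_iff:
  "iid_block_diag n D k Proj \<rho> \<longleftrightarrow> mat_restrict (idx n D) \<rho> =
     (\<Sum>js\<in>idx n k. mat_mul (idx n D) (mat_mul (idx n D) (tensor_proj Proj js) \<rho>) (tensor_proj Proj js))"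
  by (auto simp: iid_block_diag_def mat_mul_outside fun_eq_iff sum_apply2 mat_restrict_def mat_mul_tensor_proj_apply)

lemma iid_block_diag_commute:
  assumes orth: "\<forall>i<k. orth_proj D (Proj i)"
    and perp: "\<forall>i<k. \<forall>j<k. i \<noteq> j \<longrightarrow> (\<forall>a<D. \<forall>b<D. (\<Sum>c<D. Proj i a c * Proj j c b) = 0)"
    and block: "iid_block_diag n D k Proj \<rho>" and js: "js \<in> idx n k"
  defines "S \<equiv> idx n D" and "T \<equiv> tensor_proj Proj"
  shows "mat_mul S (T js) \<rho> = mat_mul S (mat_mul S (T js) \<rho>) (T js)"
    and "mat_mul S \<rho> (T js) = mat_mul S (mat_mul S (T js) \<rho>) (T js)"
proof -
  let ?M = "\<lambda>j. mat_mul S (mat_mul S (T j) \<rho>) (T j)"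
  have fin: "finite S" "finite (idx n k)" by (simp_all add: S_def finite_idx)
  have rho: "mat_restrict S \<rho> = (\<Sum>j\<in>idx n k. ?M j)"
    using block unfolding iid_block_diag_iff S_def T_def .
  have "mat_mul S (T js) \<rho> = mat_mul S (T js) (mat_restrict S \<rho>)"
    by simp
  also have "\<dots> = (\<Sum>j\<in>idx n k. mat_mul S (T js) (?M j))"
    by (simp only: rho mat_mul_sum_right)
  also have "\<dots> = (\<Sum>j\<in>idx n k. if j = js then ?M js else 0)"
  proof (rule sum.cong[OF refl])
    fix j assume "j \<in> idx n k"
    have "mat_mul S (T js) (?M j) = mat_mul S (mat_mul S (mat_mul S (T js) (T j)) \<rho>) (T j)"
      by (simp only: mat_mul_assoc[OF fin(1)])
    then show "mat_mul S (T js) (?M j) = (if j = js then ?M js else 0)"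
      using tensor_proj_mul[OF orth perp js \<open>j \<in> idx n k\<close>] by (auto simp: S_def T_def)
  qed
  finally show "mat_mul S (T js) \<rho> = ?M js"
    using js fin(2) by simp
  have "mat_mul S \<rho> (T js) = mat_mul S (mat_restrict S \<rho>) (T js)"
    by simp
  also have "\<dots> = (\<Sum>j\<in>idx n k. mat_mul S (?M j) (T js))"
    by (simp only: rho mat_mul_sum_left)
  also have "\<dots> = (\<Sum>j\<in>idx n k. if j = js then ?M js else 0)"
  proof (rule sum.cong[OF refl])
    fix j assume "j \<in> idx n k"
    have "mat_mul S (?M j) (T js) = mat_mul S (mat_mul S (T j) \<rho>) (mat_mul S (T j) (T js))"
      by (simp only: mat_mul_assoc[OF fin(1)])
    then show "mat_mul S (?M j) (T js) = (if j = js then ?M js else 0)"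
      using tensor_proj_mul[OF orth perp \<open>j \<in> idx n k\<close> js] by (auto simp: S_def T_def)
  qed
  finally show "mat_mul S \<rho> (T js) = ?M js"
    using js fin(2) by simp
qed

lemma iid_block_diag_poly_mat:
  assumes orth: "\<forall>i<k. orth_proj D (Proj i)"
    and perp: "\<forall>i<k. \<forall>j<k. i \<noteq> j \<longrightarrow> (\<forall>a<D. \<forall>b<D. (\<Sum>c<D. Proj i a c * Proj j c b) = 0)"
    and block: "iid_block_diag n D k Proj \<rho>" and "coeff p 0 = 0"
  shows "iid_block_diag n D k Proj (poly_mat (idx n D) p \<rho>)"
proof -
  define S where "S = idx n D"
  define T where "T = tensor_proj Proj"
  define B where "B = poly_mat S p \<rho>"
  have fin: "finite S" by (simp add: S_def finite_idx)
  obtain r where "p = pCons 0 r"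
    using \<open>coeff p 0 = 0\<close> by (cases p) simp
  then have B_factor: "B = mat_mul S \<rho> (poly_mat S r \<rho>)"
    by (simp add: B_def poly_mat_pCons)
  have commute: "mat_mul S (T j) \<rho> = mat_mul S (mat_mul S (T j) \<rho>) (T j)"
    "mat_mul S \<rho> (T j) = mat_mul S (mat_mul S (T j) \<rho>) (T j)" if "j \<in> idx n k" for j
    unfolding S_def T_def by (fact iid_block_diag_commute[OF orth perp block that])+
  have rho: "mat_restrict S \<rho> = (\<Sum>j\<in>idx n k. mat_mul S (mat_mul S (T j) \<rho>) (T j))"
    using block unfolding iid_block_diag_iff S_def T_def .
  have step: "mat_mul S (mat_mul S (T j) B) (T j) = mat_mul S (mat_mul S (T j) \<rho>) (poly_mat S r \<rho>)"
    if "j \<in> idx n k" for j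
  proof -
    have "mat_mul S (T j) \<rho> = mat_mul S \<rho> (T j)"
      using commute[OF that] by (rule trans[OF _ sym])
    then have comm: "mat_mul S (T j) B = mat_mul S B (T j)"
      unfolding B_def by (rule poly_mat_commute[OF fin])
    have "mat_mul S (mat_mul S (T j) B) (T j) = mat_mul S B (mat_mul S (T j) (T j))"
      by (simp only: comm mat_mul_assoc[OF fin])
    also have "\<dots> = mat_mul S (T j) B"
      using tensor_proj_mul[OF orth perp that that] by (simp add: comm flip: S_def T_def)
    finally show ?thesis
      by (simp only: B_factor mat_mul_assoc[OF fin])
  qed
  have "(\<Sum>j\<in>idx n k. mat_mul S (mat_mul S (T j) B) (T j))
      = (\<Sum>j\<in>idx n k. mat_mul S (mat_mul S (mat_mul S (T j) \<rho>) (T j)) (poly_mat S r \<rho>))"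
    by (intro sum.cong refl) (simp only: step commute(1)[symmetric])
  also have "\<dots> = mat_mul S (mat_restrict S \<rho>) (poly_mat S r \<rho>)"
    by (simp only: rho mat_mul_sum_left)
  also have "\<dots> = mat_restrict S B"
    by (simp add: B_factor)
  finally show ?thesis
    unfolding iid_block_diag_iff by (simp add: B_def S_def T_def)
qed

lemma bij_betw_permute_list_idx:
  assumes "\<pi> permutes {..<n}"
  shows "bij_betw (permute_list \<pi>) (idx n D) (idx n D)"
proof (rule bij_betw_byWitness[where f' = "permute_list (inv \<pi>)"])
  have "inv \<pi> permutes {..<n}"
    using permutes_inv[OF assms] .
  then show "permute_list \<pi> ` idx n D \<subseteq> idx n D" "permute_list (inv \<pi>) ` idx n D \<subseteq> idx n D"
    using assms by (auto simp: idx_def)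
  show "\<forall>xs\<in>idx n D. permute_list (inv \<pi>) (permute_list \<pi> xs) = xs"
    using assms permutes_inv[OF assms]
    by (auto simp: idx_def permutes_inv_o(1) simp flip: permute_list_compose)
  show "\<forall>xs\<in>idx n D. permute_list \<pi> (permute_list (inv \<pi>) xs) = xs"
    using assms
    by (auto simp: idx_def permutes_inv_o(2) simp flip: permute_list_compose)
qed

lemma perm_invariant_poly_mat:
  assumes "perm_invariant n D \<rho>"
  shows "perm_invariant n D (poly_mat (idx n D) p \<rho>)"
  unfolding perm_invariant_def
proof (intro allI impI)
  fix \<pi> :: "nat \<Rightarrow> nat" assume "\<pi> permutes {..<n}"
  then show "\<forall>x\<in>idx n D. \<forall>y\<in>idx n D. poly_mat (idx n D) p \<rho> (permute_list \<pi> x) (permute_list \<pi> y)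
      = poly_mat (idx n D) p \<rho> x y"
    using assms unfolding perm_invariant_def
    by (intro poly_mat_invariant bij_betw_permute_list_idx) auto
qed

section \<open>The purification\<close>

(* The vector sum over x, z of B x z |x> (x) |z>, where zip x z indexes the basis of
   (C^D (x) C^D)^(x)n. *)
definition vectorize :: "nat \<Rightarrow> nat \<Rightarrow> (nat list \<Rightarrow> nat list \<Rightarrow> complex) \<Rightarrow> (nat \<times> nat) list \<Rightarrow> complex" where
  "vectorize n D B ps = (if ps \<in> pidx n D then B (map fst ps) (map snd ps) else 0)"

lemma vectorize_zip:
  assumes "x \<in> idx n D" and "z \<in> idx n D"
  shows "vectorize n D B (zip x z) = B x z"
proof -
  have "set (zip x z) \<subseteq> set x \<times> set z"
    by (auto dest: set_zip_leftD set_zip_rightD)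
  then show ?thesis
    using assms by (auto simp: vectorize_def pidx_def idx_def)
qed

lemma purifies_vectorize:
  assumes "hermitian_on (idx n D) B" and "mat_mul (idx n D) B B = mat_restrict (idx n D) \<rho>"
  shows "purifies n D (vectorize n D B) \<rho>"
  unfolding purifies_def
proof (intro ballI)
  fix x y assume x: "x \<in> idx n D" and y: "y \<in> idx n D"
  have "(\<Sum>z\<in>idx n D. vectorize n D B (zip x z) * cnj (vectorize n D B (zip y z)))
      = (\<Sum>z\<in>idx n D. B x z * B z y)"
    using x y by (intro sum.cong refl) (simp add: vectorize_zip cnj_hermitian[OF assms(1)])
  also have "\<dots> = \<rho> x y"
    using fun_cong[OF fun_cong[OF assms(2)], of x y] x y by (simp add: mat_mul_apply mat_restrict_def)
  finally show "\<rho> x y = (\<Sum>z\<in>idx n D. vectorize n D B (zip x z) * cnj (vectorize n D B (zip y z)))" ..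
qed

lemma vectorize_permute:
  assumes "perm_invariant n D B" and "\<pi> permutes {..<n}"
  shows "(\<lambda>ps. vectorize n D B (permute_list \<pi> ps)) = vectorize n D B"
proof (intro ext)
  fix ps :: "(nat \<times> nat) list"
  show "vectorize n D B (permute_list \<pi> ps) = vectorize n D B ps"
  proof (cases "ps \<in> pidx n D")
    case True
    then have perm: "\<pi> permutes {..<length ps}" and "map fst ps \<in> idx n D" "map snd ps \<in> idx n D"
      using assms(2) by (auto simp: pidx_def idx_def)
    moreover have "map f (permute_list \<pi> ps) = permute_list \<pi> (map f ps)" for f :: "nat \<times> nat \<Rightarrow> nat"
      by (simp add: permute_list_map[OF perm])
    ultimately show ?thesis
      using True assms unfolding perm_invariant_def by (simp add: vectorize_def pidx_def)
  next
    case False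
    then have "permute_list \<pi> ps \<notin> pidx n D"
      using assms(2) by (auto simp: pidx_def)
    then show ?thesis
      using False by (simp add: vectorize_def)
  qed
qed

lemma sum_prod_vec_in_tensor_pow:
  assumes "finite L" and "\<And>l i. l \<in> L \<Longrightarrow> i < n \<Longrightarrow> vs l i \<in> V"
  shows "(\<lambda>ps. \<Sum>l\<in>L. c l * prod_vec n (vs l) ps) \<in> tensor_pow n V"
proof -
  obtain h where h: "bij_betw h {..<card L} L"
    using ex_bij_betw_nat_finite[OF assms(1)] by (auto simp: atLeast0LessThan)
  have "(\<lambda>ps. \<Sum>l\<in>L. c l * prod_vec n (vs l) ps) = (\<lambda>ps. \<Sum>l<card L. c (h l) * prod_vec n (vs (h l)) ps)"
    by (intro ext) (rule sum.reindex_bij_betw[OF h, symmetric])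
  moreover have "\<forall>l<card L. \<forall>i<n. vs (h l) i \<in> V"
    using h assms(2) by (auto simp: bij_betw_def)
  ultimately show ?thesis
    unfolding tensor_pow_def
    by (intro CollectI exI[of _ "card L"] exI[of _ "c \<circ> h"] exI[of _ "vs \<circ> h"]) simp
qed

lemma product_in_tensor_sub:
  assumes "u \<in> U" and "w \<in> W"
  shows "(\<lambda>(a, b). u a * w b) \<in> tensor_sub U W"
  unfolding tensor_sub_def
  by (intro CollectI exI[of _ "1::nat"] exI[of _ "\<lambda>_. 1"] exI[of _ "\<lambda>_. u"] exI[of _ "\<lambda>_. w"])
    (simp add: assms)

(* proj_pair D P u w is the product vector (P e_u) (x) (conj P e_w), as P w b = cnj (P b w). *)
definition proj_pair :: "nat \<Rightarrow> (nat \<Rightarrow> nat \<Rightarrow> complex) \<Rightarrow> nat \<Rightarrow> nat \<Rightarrow> nat \<times> nat \<Rightarrow> complex" where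
  "proj_pair D P u w = (\<lambda>(a, b). if a < D \<and> b < D then P a u * P w b else 0)"

lemma proj_pair_in_tensor_sub:
  assumes "orth_proj D P" and "u < D" and "w < D"
  shows "proj_pair D P u w \<in> tensor_sub (range_op D P) (range_op D (conj_op P))"
proof -
  let ?e = "\<lambda>c b. if b = c then 1 else (0::complex)"
  define col where "col = (\<lambda>a. if a < D then P a u else 0)"
  define row where "row = (\<lambda>b. if b < D then P w b else 0)"
  have col_eq: "col = (\<lambda>a. if a < D then \<Sum>b<D. P a b * ?e u b else 0)"
    using assms(2) by (simp add: col_def if_distrib[of "\<lambda>x. _ * x"] cong: if_cong)
  then have "col \<in> range_op D P"
    unfolding range_op_def by (intro CollectI exI[of _ "?e u"])
  have row_eq: "row = (\<lambda>b. if b < D then \<Sum>c<D. conj_op P b c * ?e w c else 0)"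
    using assms(3) orth_proj_cnj[OF assms(1) _ assms(3)]
    by (auto simp: row_def conj_op_def fun_eq_iff if_distrib[of "\<lambda>x. _ * x"] cong: if_cong)
  then have "row \<in> range_op D (conj_op P)"
    unfolding range_op_def by (intro CollectI exI[of _ "?e w"])
  moreover have "proj_pair D P u w = (\<lambda>(a, b). col a * row b)"
    by (auto simp: proj_pair_def col_def row_def fun_eq_iff)
  ultimately show ?thesis
    using \<open>col \<in> range_op D P\<close> product_in_tensor_sub by metis
qed

lemma zero_in_tensor_sub: "(\<lambda>_. 0) \<in> tensor_sub U W"
  unfolding tensor_sub_def by (intro CollectI exI[of _ "0::nat"]) (auto simp: fun_eq_iff)

lemma in_sum_sub:
  assumes "j < k" and "t \<in> S j" and "\<And>i. i < k \<Longrightarrow> (\<lambda>_. 0) \<in> S i"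
  shows "t \<in> sum_sub k S"
proof -
  have "t = (\<lambda>p. \<Sum>i<k. (if i = j then t else (\<lambda>_. 0)) p)"
    using assms(1) by (simp add: if_distrib[of "\<lambda>f. f _"] cong: if_cong)
  moreover have "\<forall>i<k. (if i = j then t else (\<lambda>_. 0)) \<in> S i"
    using assms by simp
  ultimately show ?thesis
    unfolding sum_sub_def by (intro CollectI exI[of _ "\<lambda>i. if i = j then t else (\<lambda>_. 0)"]) simp
qed

lemma vectorize_iid_block_diag:
  assumes "iid_block_diag n D k Proj B"
  shows "vectorize n D B = (\<lambda>ps. \<Sum>(js, u, w)\<in>idx n k \<times> idx n D \<times> idx n D.
           B u w * prod_vec n (\<lambda>i. proj_pair D (Proj (js ! i)) (u ! i) (w ! i)) ps)"
proof (intro ext)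
  fix ps :: "(nat \<times> nat) list"
  let ?v = "\<lambda>js u w. prod_vec n (\<lambda>i. proj_pair D (Proj (js ! i)) (u ! i) (w ! i)) ps"
  show "vectorize n D B ps = (\<Sum>(js, u, w)\<in>idx n k \<times> idx n D \<times> idx n D. B u w * ?v js u w)"
  proof (cases "ps \<in> pidx n D")
    case True
    define x where "x = map fst ps"
    define z where "z = map snd ps"
    have "x \<in> idx n D" "z \<in> idx n D" and len: "length ps = n"
      using True by (auto simp: pidx_def idx_def x_def z_def)
    have entries: "fst (ps ! i) < D \<and> snd (ps ! i) < D" if "i < n" for i
    proof -
      have "ps ! i \<in> set ps" using len that by simp
      then show ?thesis using True by (auto simp: pidx_def mem_Times_iff)
    qed
    have "?v js u w = tensor_proj Proj js x u * tensor_proj Proj js w z" if "js \<in> idx n k" for js u w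
    proof -
      have "?v js u w = (\<Prod>i<n. Proj (js ! i) (x ! i) (u ! i) * Proj (js ! i) (w ! i) (z ! i))"
        using len entries by (auto simp: prod_vec_def proj_pair_def x_def z_def case_prod_beta intro!: prod.cong)
      then show ?thesis
        using that by (simp add: tensor_proj_def prod.distrib idx_def)
    qed
    then have "(\<Sum>(js, u, w)\<in>idx n k \<times> idx n D \<times> idx n D. B u w * ?v js u w)
        = (\<Sum>js\<in>idx n k. \<Sum>u\<in>idx n D. \<Sum>w\<in>idx n D. tensor_proj Proj js x u * B u w * tensor_proj Proj js w z)"
      by (simp add: sum.cartesian_product' ac_simps)
    also have "\<dots> = B x z"
      using assms \<open>x \<in> idx n D\<close> \<open>z \<in> idx n D\<close> unfolding iid_block_diag_def by simp
    finally show ?thesis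
      using True by (simp add: vectorize_def x_def z_def)
  next
    case False
    have "?v js u w = 0" for js u w
    proof (cases "length ps = n")
      case True
      with False obtain q where "q \<in> set ps" "q \<notin> {..<D} \<times> {..<D}"
        by (auto simp: pidx_def)
      then obtain i where i: "i < n" "ps ! i \<notin> {..<D} \<times> {..<D}"
        using True by (auto simp: in_set_conv_nth)
      then have "proj_pair D (Proj (js ! i)) (u ! i) (w ! i) (ps ! i) = 0"
        by (auto simp: proj_pair_def case_prod_beta mem_Times_iff)
      then show ?thesis
        using True i(1) by (auto simp: prod_vec_def intro!: prod_zero)
    qed (simp add: prod_vec_def)
    then show ?thesis
      using False by (simp add: vectorize_def)
  qed
qed

lemma vectorize_in_tensor_pow:
  assumes "\<forall>i<k. orth_proj D (Proj i)" and "iid_block_diag n D k Proj B"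
  shows "vectorize n D B
    \<in> tensor_pow n (sum_sub k (\<lambda>i. tensor_sub (range_op D (Proj i)) (range_op D (conj_op (Proj i)))))"
  unfolding vectorize_iid_block_diag[OF assms(2)] case_prod_beta
proof (rule sum_prod_vec_in_tensor_pow)
  fix l i assume "l \<in> idx n k \<times> idx n D \<times> idx n D" "i < n"
  then have "fst l ! i < k" "fst (snd l) ! i < D" "snd (snd l) ! i < D"
    by (auto intro: idx_nth)
  then show "proj_pair D (Proj (fst l ! i)) (fst (snd l) ! i) (snd (snd l) ! i)
      \<in> sum_sub k (\<lambda>i. tensor_sub (range_op D (Proj i)) (range_op D (conj_op (Proj i))))"
    using assms(1) by (intro in_sum_sub) (auto intro: proj_pair_in_tensor_sub zero_in_tensor_sub)
qed (simp add: finite_idx)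

theorem lemma1:
  fixes dA dB n k :: nat
    and \<rho> :: "nat list \<Rightarrow> nat list \<Rightarrow> complex"
    and Proj :: "nat \<Rightarrow> nat \<Rightarrow> nat \<Rightarrow> complex"
  assumes "psd_op n (dA * dB) \<rho>"
    and "perm_invariant n (dA * dB) \<rho>"
    and "\<forall>i<k. orth_proj (dA * dB) (Proj i)"
    and "\<forall>i<k. \<forall>j<k. i \<noteq> j \<longrightarrow>
           (\<forall>a<dA * dB. \<forall>b<dA * dB. (\<Sum>c<dA * dB. Proj i a c * Proj j c b) = 0)"
    and "iid_block_diag n (dA * dB) k Proj \<rho>"
  shows "\<exists>\<Psi>. purifies n (dA * dB) \<Psi> \<rho> \<and>
           \<Psi> \<in> Sym n (sum_sub k (\<lambda>i. tensor_sub (range_op (dA * dB) (Proj i))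
                                                 (range_op (dA * dB) (conj_op (Proj i)))))"
proof -
  let ?S = "idx n (dA * dB)"
  let ?V = "sum_sub k (\<lambda>i. tensor_sub (range_op (dA * dB) (Proj i)) (range_op (dA * dB) (conj_op (Proj i))))"
  have herm: "hermitian_on ?S \<rho>" and psd: "psd_on ?S \<rho>"
    using assms(1) unfolding psd_op_def hermitian_on_def psd_on_def by blast+
  obtain p where real: "\<forall>i. coeff p i \<in> \<real>" and "coeff p 0 = 0"
    and sqrt: "mat_mul ?S (poly_mat ?S p \<rho>) (poly_mat ?S p \<rho>) = mat_restrict ?S \<rho>"
    using psd_sqrt_poly[OF finite_idx herm psd] by blast
  define B where "B = poly_mat ?S p \<rho>"
  have "hermitian_on ?S B"
    unfolding B_def using real by (intro hermitian_poly_mat[OF finite_idx herm]) auto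
  then have "purifies n (dA * dB) (vectorize n (dA * dB) B) \<rho>"
    by (rule purifies_vectorize) (use sqrt B_def in simp)
  moreover have "vectorize n (dA * dB) B \<in> tensor_pow n ?V"
    unfolding B_def
    by (rule vectorize_in_tensor_pow[OF assms(3) iid_block_diag_poly_mat[OF assms(3-5) \<open>coeff p 0 = 0\<close>]])
  moreover have "(\<lambda>ps. vectorize n (dA * dB) B (permute_list \<pi> ps)) = vectorize n (dA * dB) B"
    if "\<pi> permutes {..<n}" for \<pi>
    unfolding B_def using perm_invariant_poly_mat[OF assms(2)] that by (rule vectorize_permute)
  ultimately show ?thesis
    unfolding Sym_def by blast
qed

end
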